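(* Let $G$ be a connected graph with $|V(G)| \ge 3$ and $\det(G) = 1$. Then $\det'(G) = 2$ if $G$ is edge-flip-invariant, and $\det'(G) = 1$ otherwise.
   Context: $G$ is edge-flip-invariant if for every edge $\{u,v\}\in E(G)$ there is an automorphism $\phi$ of $G$ with $\phi(u)=v$ and $\phi(v)=u$. A vertex subset $S$ of $G$ is a vertex determining set if the only automorphism of $G$ fixing every vertex of $S$ is the identity; the determining number $\det(G)$ is the minimum size of a vertex determining set. For a graph $G$ with at most one isolated vertex and no component isomorphic to $K_2$, an edge subset $T$ is an edge determining set if the only automorphism $\phi$ of $G$ satisfying $\{\phi(u),\phi(v)\}=\{u,v\}$ for all $\{u,v\}\in T$ is the identity; the determining index $\det'(G)$ is the minimum size of an edge determining set. *)

theory Defs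
  imports Main
begin

definition simple_graph :: "'a set \<Rightarrow> ('a \<Rightarrow> 'a \<Rightarrow> bool) \<Rightarrow> bool" where
  "simple_graph V E \<longleftrightarrow> finite V \<and> (\<forall>u v. E u v \<longrightarrow> u \<in> V \<and> v \<in> V)
     \<and> (\<forall>u v. E u v \<longrightarrow> E v u) \<and> (\<forall>u. \<not> E u u)"

definition edges :: "('a \<Rightarrow> 'a \<Rightarrow> bool) \<Rightarrow> 'a set set" where
  "edges E = {{u, v} | u v. E u v}"

definition connected_graph :: "'a set \<Rightarrow> ('a \<Rightarrow> 'a \<Rightarrow> bool) \<Rightarrow> bool" where
  "connected_graph V E \<longleftrightarrow> (\<forall>u\<in>V. \<forall>v\<in>V. E\<^sup>*\<^sup>* u v)"

text \<open>Automorphisms, represented as permutations of V that are the identity outside V.\<close>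
definition automorphisms :: "'a set \<Rightarrow> ('a \<Rightarrow> 'a \<Rightarrow> bool) \<Rightarrow> ('a \<Rightarrow> 'a) set" where
  "automorphisms V E = {\<phi>. bij_betw \<phi> V V \<and> (\<forall>x. x \<notin> V \<longrightarrow> \<phi> x = x)
      \<and> (\<forall>u\<in>V. \<forall>v\<in>V. E u v \<longleftrightarrow> E (\<phi> u) (\<phi> v))}"

definition edge_flip_invariant :: "'a set \<Rightarrow> ('a \<Rightarrow> 'a \<Rightarrow> bool) \<Rightarrow> bool" where
  "edge_flip_invariant V E \<longleftrightarrow>
     (\<forall>u v. E u v \<longrightarrow> (\<exists>\<phi>\<in>automorphisms V E. \<phi> u = v \<and> \<phi> v = u))"

definition vertex_determining_set :: "'a set \<Rightarrow> ('a \<Rightarrow> 'a \<Rightarrow> bool) \<Rightarrow> 'a set \<Rightarrow> bool" where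
  "vertex_determining_set V E S \<longleftrightarrow> S \<subseteq> V \<and>
     (\<forall>\<phi>\<in>automorphisms V E. (\<forall>x\<in>S. \<phi> x = x) \<longrightarrow> \<phi> = id)"

definition determining_number :: "'a set \<Rightarrow> ('a \<Rightarrow> 'a \<Rightarrow> bool) \<Rightarrow> nat" where
  "determining_number V E = (LEAST n. \<exists>S. vertex_determining_set V E S \<and> card S = n)"

definition edge_determining_set :: "'a set \<Rightarrow> ('a \<Rightarrow> 'a \<Rightarrow> bool) \<Rightarrow> 'a set set \<Rightarrow> bool" where
  "edge_determining_set V E T \<longleftrightarrow> T \<subseteq> edges E \<and>
     (\<forall>\<phi>\<in>automorphisms V E. (\<forall>u v. {u, v} \<in> T \<longrightarrow> {\<phi> u, \<phi> v} = {u, v}) \<longrightarrow> \<phi> = id)"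

definition determining_index :: "'a set \<Rightarrow> ('a \<Rightarrow> 'a \<Rightarrow> bool) \<Rightarrow> nat" where
  "determining_index V E = (LEAST n. \<exists>T. edge_determining_set V E T \<and> card T = n)"

end

theory Submission
  imports Defs
begin

text \<open>A determining set of size one is a vertex \<open>w\<close> with trivial stabiliser, and every image
  of such a vertex under an automorphism again has trivial stabiliser. Moreover \<open>det(G) = 1\<close>
  forces a nontrivial automorphism, so the empty edge set is not determining.

  If \<open>G\<close> is not edge-flip-invariant, some edge \<open>ab\<close> with \<open>a\<close> of trivial stabiliser cannot be
  flipped: otherwise, walking along edges from \<open>w\<close>, every vertex would have trivial stabiliser
  and every edge could be flipped. An automorphism fixing \<open>ab\<close> setwise then fixes \<open>a\<close>, so
  \<open>{ab}\<close> is determining. If \<open>G\<close> is edge-flip-invariant, the flip of an edge shows that no single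
  edge is determining, while an edge \<open>wx\<close> together with an adjacent edge \<open>zy\<close> (\<open>z \<in> {w,x}\<close>,
  \<open>y \<notin> {w,x}\<close>), which exists as \<open>G\<close> is connected with at least three vertices, is determining:
  an automorphism preserving both edges cannot swap \<open>w\<close> and \<open>x\<close>, hence fixes \<open>w\<close>.\<close>

lemma automorphism_bij:
  assumes "\<phi> \<in> automorphisms V E"
  shows "bij \<phi>"
proof -
  have "bij_betw \<phi> V V" and "\<forall>x. x \<notin> V \<longrightarrow> \<phi> x = x"
    using assms by (auto simp: automorphisms_def)
  moreover from this(2) have "bij_betw \<phi> (- V) (- V)"
    using bij_betw_id[of "- V"] by (metis ComplD bij_betw_cong id_apply)
  ultimately have "bij_betw \<phi> (V \<union> - V) (V \<union> - V)"
    by (intro bij_betw_combine) auto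
  then show ?thesis
    by simp
qed

lemma automorphism_inv:
  assumes "\<sigma> \<in> automorphisms V E"
  shows "inv \<sigma> \<in> automorphisms V E"
proof -
  have bij: "bij \<sigma>"
    using assms by (rule automorphism_bij)
  have \<sigma>: "bij_betw \<sigma> V V" "\<forall>x. x \<notin> V \<longrightarrow> \<sigma> x = x"
    "\<forall>u\<in>V. \<forall>v\<in>V. E u v \<longleftrightarrow> E (\<sigma> u) (\<sigma> v)"
    using assms by (auto simp: automorphisms_def)
  have inv_V: "bij_betw (inv \<sigma>) V V"
    using bij_betw_inv_into_subset[OF bij _ bij_betw_imp_surj_on[OF \<sigma>(1)]] by simp
  then have "\<forall>u\<in>V. \<forall>v\<in>V. E u v \<longleftrightarrow> E (inv \<sigma> u) (inv \<sigma> v)"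
    using \<sigma>(3) bij by (metis bij_betwE bij_inv_eq_iff)
  moreover have "\<forall>x. x \<notin> V \<longrightarrow> inv \<sigma> x = x"
    using \<sigma>(2) bij by (metis bij_inv_eq_iff)
  ultimately show ?thesis
    using inv_V by (auto simp: automorphisms_def)
qed

lemma automorphism_comp:
  assumes "\<sigma> \<in> automorphisms V E" and "\<tau> \<in> automorphisms V E"
  shows "\<sigma> \<circ> \<tau> \<in> automorphisms V E"
proof -
  have \<sigma>: "bij_betw \<sigma> V V" "\<forall>x. x \<notin> V \<longrightarrow> \<sigma> x = x"
    "\<forall>u\<in>V. \<forall>v\<in>V. E u v \<longleftrightarrow> E (\<sigma> u) (\<sigma> v)"
    and \<tau>: "bij_betw \<tau> V V" "\<forall>x. x \<notin> V \<longrightarrow> \<tau> x = x"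
    "\<forall>u\<in>V. \<forall>v\<in>V. E u v \<longleftrightarrow> E (\<tau> u) (\<tau> v)"
    using assms by (auto simp: automorphisms_def)
  have "bij_betw (\<sigma> \<circ> \<tau>) V V"
    using \<tau>(1) \<sigma>(1) by (rule bij_betw_trans)
  moreover have "\<forall>u\<in>V. \<forall>v\<in>V. E u v \<longleftrightarrow> E ((\<sigma> \<circ> \<tau>) u) ((\<sigma> \<circ> \<tau>) v)"
    using \<sigma>(3) \<tau>(1,3) by (metis bij_betwE comp_apply)
  ultimately show ?thesis
    using \<sigma>(2) \<tau>(2) by (simp add: automorphisms_def)
qed

lemma vertex_determining_set_vertices: "vertex_determining_set V E V"
  by (auto simp: vertex_determining_set_def automorphisms_def fun_eq_iff)

lemma vertex_determining_set_singleton_image: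
  assumes w: "vertex_determining_set V E {w}" and \<sigma>: "\<sigma> \<in> automorphisms V E"
  shows "vertex_determining_set V E {\<sigma> w}"
  unfolding vertex_determining_set_def
proof (intro conjI ballI impI)
  show "{\<sigma> w} \<subseteq> V"
    using w \<sigma> by (auto simp: vertex_determining_set_def automorphisms_def dest: bij_betwE)
  fix \<phi> assume \<phi>: "\<phi> \<in> automorphisms V E" and fix_\<sigma>w: "\<forall>x\<in>{\<sigma> w}. \<phi> x = x"
  have bij: "bij \<sigma>"
    using \<sigma> by (rule automorphism_bij)
  have "inv \<sigma> \<circ> \<phi> \<circ> \<sigma> \<in> automorphisms V E"
    using \<sigma> \<phi> by (intro automorphism_comp automorphism_inv)
  moreover have "(inv \<sigma> \<circ> \<phi> \<circ> \<sigma>) w = w"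
    using fix_\<sigma>w bij by (simp add: bij_is_inj)
  ultimately have "inv \<sigma> \<circ> \<phi> \<circ> \<sigma> = id"
    using w by (auto simp: vertex_determining_set_def)
  then have "\<phi> (\<sigma> y) = \<sigma> y" for y
    using bij by (metis bij_inv_eq_iff comp_apply id_apply)
  then show "\<phi> = id"
    using bij by (metis bij_pointE eq_id_iff)
qed

lemma determining_number_eq_1:
  assumes "determining_number V E = 1"
  obtains w where "vertex_determining_set V E {w}" and "\<not> vertex_determining_set V E {}"
proof -
  have "\<exists>n S. vertex_determining_set V E S \<and> card S = n"
    using vertex_determining_set_vertices by blast
  from LeastI_ex[OF this] obtain S where "vertex_determining_set V E S" "card S = 1"
    using assms by (auto simp: determining_number_def)
  moreover from \<open>card S = 1\<close> obtain w where "S = {w}"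
    by (rule card_1_singletonE)
  moreover have "\<not> vertex_determining_set V E {}"
  proof
    assume "vertex_determining_set V E {}"
    then have "determining_number V E = 0"
      unfolding determining_number_def by (intro Least_eq_0) (use card.empty in blast)
    with assms show False
      by simp
  qed
  ultimately show thesis
    using that by blast
qed

lemma edge_determining_set_empty_iff:
  "edge_determining_set V E {} \<longleftrightarrow> vertex_determining_set V E {}"
  by (simp add: edge_determining_set_def vertex_determining_set_def)

lemma finite_edges:
  assumes "simple_graph V E"
  shows "finite (edges E)"
proof -
  have "edges E \<subseteq> Pow V"
    using assms by (auto simp: simple_graph_def edges_def)
  then show ?thesis
    using assms by (auto simp: simple_graph_def intro: finite_subset)
qed

lemma determining_index_eqI:
  assumes "edge_determining_set V E T" and "card T = n"
    and "\<And>T. edge_determining_set V E T \<Longrightarrow> n \<le> card T"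
  shows "determining_index V E = n"
  unfolding determining_index_def using assms by (intro Least_equality) blast+

lemma connected_graph_edge_leaving:
  assumes "connected_graph V E" and "u \<in> S" "u \<in> V" and "v \<in> V" "v \<notin> S"
  obtains a b where "a \<in> S" "b \<notin> S" "E a b"
proof -
  have "q \<in> S \<or> (\<exists>a\<in>S. \<exists>b. b \<notin> S \<and> E a b)" if "E\<^sup>*\<^sup>* u q" for q
    using that by (induction rule: rtranclp_induct) (use \<open>u \<in> S\<close> in auto)
  moreover have "E\<^sup>*\<^sup>* u v"
    using assms by (simp add: connected_graph_def)
  ultimately show thesis
    using that \<open>v \<notin> S\<close> by blast
qed

lemma edge_determining_set_edge_pair:
  assumes w: "vertex_determining_set V E {w}" and "E w x" "E z y"
    and "z \<in> {w, x}" "y \<notin> {w, x}"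
  shows "edge_determining_set V E {{w, x}, {z, y}}"
  unfolding edge_determining_set_def
proof (intro conjI ballI impI)
  show "{{w, x}, {z, y}} \<subseteq> edges E"
    using assms by (auto simp: edges_def)
  fix \<phi> assume \<phi>: "\<phi> \<in> automorphisms V E"
    and preserves: "\<forall>u v. {u, v} \<in> {{w, x}, {z, y}} \<longrightarrow> {\<phi> u, \<phi> v} = {u, v}"
  have "\<phi> w = w"
  proof (rule ccontr)
    assume "\<phi> w \<noteq> w"
    then have "\<phi> w = x" "\<phi> x = w"
      using preserves by (auto simp: doubleton_eq_iff)
    moreover have "{\<phi> z, \<phi> y} = {z, y}"
      using preserves by blast
    ultimately show False
      using \<open>z \<in> {w, x}\<close> \<open>y \<notin> {w, x}\<close> \<open>\<phi> w \<noteq> w\<close> by (auto simp: doubleton_eq_iff)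
  qed
  then show "\<phi> = id"
    using w \<phi> by (simp add: vertex_determining_set_def)
qed

lemma edge_determining_set_unflippable_edge:
  assumes "vertex_determining_set V E {a}" and "E a b"
    and "\<not> (\<exists>\<phi>\<in>automorphisms V E. \<phi> a = b \<and> \<phi> b = a)"
  shows "edge_determining_set V E {{a, b}}"
  using assms by (auto simp: edge_determining_set_def vertex_determining_set_def edges_def
      doubleton_eq_iff)

lemma edge_flip_invariant_if_determining_edges_flip:
  assumes "simple_graph V E" "connected_graph V E" and w: "vertex_determining_set V E {w}"
    and flip: "\<And>a b. vertex_determining_set V E {a} \<Longrightarrow> E a b \<Longrightarrow>
      \<exists>\<phi>\<in>automorphisms V E. \<phi> a = b \<and> \<phi> b = a"
  shows "edge_flip_invariant V E"
proof -
  have "vertex_determining_set V E {q}" if "E\<^sup>*\<^sup>* w q" for q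
    using that
  proof (induction rule: rtranclp_induct)
    case (step q q')
    then obtain \<phi> where "\<phi> \<in> automorphisms V E" "\<phi> q = q'"
      using flip by blast
    with step.IH show ?case
      using vertex_determining_set_singleton_image by metis
  qed (rule w)
  moreover have "w \<in> V"
    using w by (simp add: vertex_determining_set_def)
  ultimately have "vertex_determining_set V E {a}" if "E a b" for a b
    using that assms(1,2) by (auto simp: connected_graph_def simple_graph_def)
  then show ?thesis
    using flip by (auto simp: edge_flip_invariant_def)
qed

lemma card_gt_0_if_edge_determining_set:
  assumes "simple_graph V E" and "\<not> vertex_determining_set V E {}"
    and "edge_determining_set V E T"
  shows "card T > 0"
proof -
  have "finite T"
    using assms(1,3) finite_edges by (auto simp: edge_determining_set_def intro: finite_subset)
  moreover have "T \<noteq> {}"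
    using assms(2,3) edge_determining_set_empty_iff by blast
  ultimately show ?thesis
    by (simp add: card_gt_0_iff)
qed

lemma edge_determining_set_card_2_exists:
  assumes "connected_graph V E" "card V \<ge> 3" and w: "vertex_determining_set V E {w}"
  obtains T where "edge_determining_set V E T" "card T = 2"
proof -
  have outside: "\<exists>v\<in>V. v \<notin> {a, b}" for a b
  proof (rule ccontr)
    assume "\<not> (\<exists>v\<in>V. v \<notin> {a, b})"
    then have "card V \<le> card {a, b}"
      by (intro card_mono) auto
    also have "\<dots> \<le> 2"
      by (simp add: card_insert_if)
    finally show False
      using assms(2) by simp
  qed
  have "w \<in> V"
    using w by (simp add: vertex_determining_set_def)
  then obtain x where "E w x"
    using connected_graph_edge_leaving[OF assms(1), of w "{w}"] outside[of w w] by auto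
  moreover obtain z y where "z \<in> {w, x}" "y \<notin> {w, x}" "E z y"
    using connected_graph_edge_leaving[OF assms(1), of w "{w, x}"] outside[of w x] \<open>w \<in> V\<close>
    by blast
  ultimately have "edge_determining_set V E {{w, x}, {z, y}}"
    using w by (intro edge_determining_set_edge_pair)
  moreover have "card {{w, x}, {z, y}} = 2"
    using \<open>y \<notin> {w, x}\<close> by (auto simp: doubleton_eq_iff)
  ultimately show thesis
    by (rule that)
qed

lemma edge_flip_invariant_not_edge_determining_singleton:
  assumes "simple_graph V E" and "edge_flip_invariant V E"
  shows "\<not> edge_determining_set V E {e}"
proof
  assume e: "edge_determining_set V E {e}"
  then obtain u v where "e = {u, v}" "E u v"
    by (auto simp: edge_determining_set_def edges_def)
  moreover obtain \<phi> where "\<phi> \<in> automorphisms V E" "\<phi> u = v" "\<phi> v = u"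
    using assms(2) \<open>E u v\<close> by (auto simp: edge_flip_invariant_def)
  moreover have "u \<noteq> v"
    using assms(1) \<open>E u v\<close> by (auto simp: simple_graph_def)
  ultimately have "\<phi> \<noteq> id" and "\<forall>a b. {a, b} \<in> {e} \<longrightarrow> {\<phi> a, \<phi> b} = {a, b}"
    by (auto simp: doubleton_eq_iff)
  with e \<open>\<phi> \<in> automorphisms V E\<close> show False
    by (simp add: edge_determining_set_def)
qed

lemma card_ge_2_if_edge_determining_set:
  assumes "simple_graph V E" and "edge_flip_invariant V E"
    and "\<not> vertex_determining_set V E {}" and T: "edge_determining_set V E T"
  shows "card T \<ge> 2"
proof -
  have "card T \<noteq> 1"
    using T edge_flip_invariant_not_edge_determining_singleton[OF assms(1,2)]
    by (auto simp: card_1_singleton_iff)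
  moreover have "card T > 0"
    using assms(1,3) T by (rule card_gt_0_if_edge_determining_set)
  ultimately show ?thesis
    by linarith
qed

theorem corollary2:
  fixes V :: "'a set" and E :: "'a \<Rightarrow> 'a \<Rightarrow> bool"
  assumes "simple_graph V E"
    and "connected_graph V E"
    and "card V \<ge> 3"
    and "determining_number V E = 1"
  shows "determining_index V E = (if edge_flip_invariant V E then 2 else 1)"
proof -
  obtain w where w: "vertex_determining_set V E {w}"
    and nontrivial: "\<not> vertex_determining_set V E {}"
    using assms(4) by (rule determining_number_eq_1)
  show ?thesis
  proof (cases "edge_flip_invariant V E")
    case True
    obtain T where "edge_determining_set V E T" "card T = 2"
      using assms(2,3) w by (rule edge_determining_set_card_2_exists)
    then show ?thesis
      using True card_ge_2_if_edge_determining_set[OF assms(1) True nontrivial]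
      by (simp add: determining_index_eqI)
  next
    case False
    then obtain a b where "vertex_determining_set V E {a}" "E a b"
      "\<not> (\<exists>\<phi>\<in>automorphisms V E. \<phi> a = b \<and> \<phi> b = a)"
      using edge_flip_invariant_if_determining_edges_flip[OF assms(1,2) w] by blast
    then have "edge_determining_set V E {{a, b}}"
      by (rule edge_determining_set_unflippable_edge)
    then show ?thesis
      using False card_gt_0_if_edge_determining_set[OF assms(1) nontrivial]
      by (intro determining_index_eqI[of _ _ "{{a, b}}"]) (auto simp: Suc_leI)
  qed
qed

end
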